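(* Let $(W,W')$ be random vectors in $\mathbb{Z}^d$ such that $(W,W')$ and $(W',W)$ have the same distribution, with $\mathbb{E}|W'-W|^2<\infty$. Put $\xi:=W'-W$, let $\mathcal J:=\{J\in\mathbb{Z}^d: q^J:=\mathbb{P}[\xi=J]>0\}$, and suppose that for each $1\le j\le d$ there are $J^{(j)}_1,\dots,J^{(j)}_{r(j)}\in\mathcal J$ with $\sum_{l=1}^{r(j)}J^{(j)}_l=e^{(j)}$ (fixed choices). For $Q^J(W):=\mathbb{P}[\xi=J\mid W]$ let $u^J:=(q^J)^{-1}\mathbb{E}|Q^J(W)-q^J|$, $\tilde u_j:=\sum_{l=1}^{r(j)}(u^{J^{(j)}_l}+u^{-J^{(j)}_l})$, $\tilde u^*:=\max_j\tilde u_j$ and $u^*:=\sup_{J\in\mathcal J}u^J$. Then for each $1\le j\le d$ and each $J\in\mathcal J$: (i) $d_{TV}(\mathcal{L}(W+e^{(j)}),\mathcal{L}(W))\le\tilde u_j\le\tilde u^*$; (ii) $d_{TV}(\mathcal{L}(W+e^{(j)}\mid\xi=J),\mathcal{L}(W\mid\xi=J))\le\tilde u_j+2u^J\le\tilde u^*+2u^*$. Furthermore, with $\sigma^2:=\mathbb{E}\{\xi\xi^T\}$ and $R_2(W):=\mathbb{E}\{\xi\xi^T\mid W\}-\sigma^2$, (iii) $\mathbb{E}\|R_2(W)\|_1\le d\,\mathrm{Tr}(\sigma^2)\,u^*$.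
   Context: $\|M\|_1:=\sum_{i,j}|M_{ij}|$; $e^{(j)}$ is the $j$-th coordinate vector. (By exchangeability, $q^{-J}=q^J$, so $-J\in\mathcal J$ whenever $J\in\mathcal J$.) *)

theory Defs
  imports "HOL-Analysis.Analysis" "HOL-Probability.Probability"
begin

text \<open>The joint law of the pair (W, W') of random vectors in Z^d is a pmf P on
  pairs of integer vectors indexed by a finite type 'd (so d = CARD('d)).\<close>

definition xi :: "(int^'d) \<times> (int^'d) \<Rightarrow> int^'d" where
  "xi x = snd x - fst x"

definition unitv :: "'d::finite \<Rightarrow> int^'d" where
  "unitv j = (\<chi> i. if i = j then 1 else 0)"

definition lawW :: "((int^'d) \<times> (int^'d)) pmf \<Rightarrow> (int^'d) pmf" where
  "lawW P = map_pmf fst P"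

definition qJ :: "((int^'d) \<times> (int^'d)) pmf \<Rightarrow> int^'d \<Rightarrow> real" where
  "qJ P J = measure_pmf.prob P {x. xi x = J}"

definition calJ :: "((int^'d) \<times> (int^'d)) pmf \<Rightarrow> (int^'d) set" where
  "calJ P = {J. qJ P J > 0}"

text \<open>Conditional law of the pair given W = w (meaningful for w in the support of W).\<close>
definition condW :: "((int^'d) \<times> (int^'d)) pmf \<Rightarrow> int^'d \<Rightarrow> ((int^'d) \<times> (int^'d)) pmf" where
  "condW P w = cond_pmf P {x. fst x = w}"

definition QJ :: "((int^'d) \<times> (int^'d)) pmf \<Rightarrow> int^'d \<Rightarrow> int^'d \<Rightarrow> real" where
  "QJ P J w = measure_pmf.prob (condW P w) {x. xi x = J}"

definition uJ :: "((int^'d) \<times> (int^'d)) pmf \<Rightarrow> int^'d \<Rightarrow> real" where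
  "uJ P J = (1 / qJ P J) * measure_pmf.expectation (lawW P) (\<lambda>w. \<bar>QJ P J w - qJ P J\<bar>)"

text \<open>tilde u_j for the fixed choices Jsel j = [J^(j)_1, ..., J^(j)_r(j)]\<close>
definition utilde :: "((int^'d) \<times> (int^'d)) pmf \<Rightarrow> ('d \<Rightarrow> (int^'d) list) \<Rightarrow> 'd \<Rightarrow> real" where
  "utilde P Jsel j = sum_list (map (\<lambda>J. uJ P J + uJ P (- J)) (Jsel j))"

definition utilde_star :: "((int^'d::finite) \<times> (int^'d)) pmf \<Rightarrow> ('d \<Rightarrow> (int^'d) list) \<Rightarrow> real" where
  "utilde_star P Jsel = Max (range (utilde P Jsel))"

definition ustar :: "((int^'d) \<times> (int^'d)) pmf \<Rightarrow> real" where
  "ustar P = Sup (uJ P ` calJ P)"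

definition dTV :: "'a pmf \<Rightarrow> 'a pmf \<Rightarrow> real" where
  "dTV p q = (SUP A. \<bar>measure_pmf.prob p A - measure_pmf.prob q A\<bar>)"

definition sigma2 :: "((int^'d) \<times> (int^'d)) pmf \<Rightarrow> 'd \<Rightarrow> 'd \<Rightarrow> real" where
  "sigma2 P i k = measure_pmf.expectation P (\<lambda>x. real_of_int ((xi x) $ i * (xi x) $ k))"

definition R2 :: "((int^'d) \<times> (int^'d)) pmf \<Rightarrow> int^'d \<Rightarrow> 'd \<Rightarrow> 'd \<Rightarrow> real" where
  "R2 P w i k = measure_pmf.expectation (condW P w) (\<lambda>x. real_of_int ((xi x) $ i * (xi x) $ k))
                 - sigma2 P i k"

definition norm1 :: "('d::finite \<Rightarrow> 'd \<Rightarrow> real) \<Rightarrow> real" where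
  "norm1 M = (\<Sum>i\<in>UNIV. \<Sum>k\<in>UNIV. \<bar>M i k\<bar>)"

definition trace_mat :: "('d::finite \<Rightarrow> 'd \<Rightarrow> real) \<Rightarrow> real" where
  "trace_mat M = (\<Sum>i\<in>UNIV. M i i)"

end

theory Submission imports Defs begin

text \<open>By the tower property P[W \<in> A, xi = J] = E[1_A(W) Q^J(W)], which differs from
  q^J P[W \<in> A] by at most E|Q^J(W) - q^J| = q^J u^J. Exchangeability rewrites P[W \<in> A, xi = J]
  as P[W - J \<in> A, xi = -J], which is within q^J u^{-J} of q^J P[W - J \<in> A] because q^{-J} = q^J.
  Dividing by q^J, shifting W by J \<in> calJ moves its law by at most u^J + u^{-J} in total variation,
  and telescoping along e^(j) = J^(j)_1 + ... + J^(j)_r(j) gives (i); conditioning on xi = J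
  costs u^J for each of the two laws in (ii). For (iii), R_2(w)_ik = \<Sum>_J J_i J_k (Q^J(w) - q^J),
  so E|R_2(W)_ik| \<le> \<Sum>_J |J_i J_k| q^J u^*, and \<Sum>_ik |J_i J_k| \<le> d |J|^2.\<close>

lemma measure_cond_pmf:
  assumes "set_pmf p \<inter> s \<noteq> {}"
  shows "measure (cond_pmf p s) A = measure p (s \<inter> A) / measure p s"
proof -
  have "emeasure (measure_pmf p) s \<noteq> 0"
    using assms by (simp add: measure_pmf.emeasure_eq_measure measure_pmf_zero_iff)
  then show ?thesis
    using assms by (simp add: cond_pmf.rep_eq measure_pmf.emeasure_eq_measure)
qed

lemma integrable_cond_pmf:
  fixes f :: "'a \<Rightarrow> real"
  assumes ne: "set_pmf p \<inter> s \<noteq> {}" and f: "integrable (measure_pmf p) f"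
  shows "integrable (measure_pmf (cond_pmf p s)) f"
proof -
  define c where "c = measure p s"
  have c: "c > 0"
    using ne measure_pmf_zero_iff[of p s] measure_nonneg[of p s] unfolding c_def by linarith
  have pmf_le: "ennreal (pmf (cond_pmf p s) x) \<le> ennreal (1 / c) * ennreal (pmf p x)" for x
    using c by (simp add: pmf_cond[OF ne] c_def ennreal_mult'[symmetric] pmf_nonneg)
  have "(\<integral>\<^sup>+ x. ennreal (norm (f x)) \<partial>cond_pmf p s)
      = (\<integral>\<^sup>+ x. ennreal (pmf (cond_pmf p s) x) * ennreal (norm (f x)) \<partial>count_space UNIV)"
    by (rule nn_integral_measure_pmf)
  also have "\<dots> \<le> (\<integral>\<^sup>+ x. ennreal (1 / c) * (ennreal (pmf p x) * ennreal (norm (f x))) \<partial>count_space UNIV)"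
    by (rule nn_integral_mono) (metis pmf_le mult.assoc mult_right_mono zero_le)
  also have "\<dots> = ennreal (1 / c) * (\<integral>\<^sup>+ x. ennreal (norm (f x)) \<partial>p)"
    by (simp add: nn_integral_cmult nn_integral_measure_pmf)
  also have "\<dots> < \<infinity>"
    using f by (simp add: integrable_iff_bounded ennreal_mult_less_top)
  finally show ?thesis
    by (simp add: integrable_iff_bounded)
qed

lemma integrable_measure_pmf_bounded:
  fixes f :: "'a \<Rightarrow> real"
  shows "(\<And>x. \<bar>f x\<bar> \<le> B) \<Longrightarrow> integrable (measure_pmf p) f"
  by (rule measure_pmf.integrable_const_bound[where B=B]) auto

lemma abs_expectation_diff_le:
  fixes h :: "'a \<Rightarrow> real"
  assumes "integrable (measure_pmf \<mu>) h" "integrable (measure_pmf \<nu>) h"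
  shows "ennreal \<bar>measure_pmf.expectation \<mu> h - measure_pmf.expectation \<nu> h\<bar>
     \<le> (\<integral>\<^sup>+ x. ennreal (\<bar>h x\<bar> * \<bar>pmf \<mu> x - pmf \<nu> x\<bar>) \<partial>count_space UNIV)"
proof -
  have int: "integrable (count_space UNIV) (\<lambda>x. pmf p x * h x)"
    if "integrable (measure_pmf p) h" for p :: "'a pmf"
    using that by (subst (asm) measure_pmf_eq_density) (simp add: integrable_density)
  have expectation: "measure_pmf.expectation p h = (\<integral>x. pmf p x * h x \<partial>count_space UNIV)" for p
    by (subst measure_pmf_eq_density) (simp add: integral_density)
  have "\<bar>measure_pmf.expectation \<mu> h - measure_pmf.expectation \<nu> h\<bar>
     = \<bar>\<integral>x. pmf \<mu> x * h x - pmf \<nu> x * h x \<partial>count_space UNIV\<bar>"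
    by (simp add: expectation Bochner_Integration.integral_diff[OF int int] assms)
  also have "\<dots> \<le> (\<integral>x. \<bar>pmf \<mu> x * h x - pmf \<nu> x * h x\<bar> \<partial>count_space UNIV)"
    by (rule integral_abs_bound)
  finally have "ennreal \<bar>measure_pmf.expectation \<mu> h - measure_pmf.expectation \<nu> h\<bar>
     \<le> ennreal (\<integral>x. \<bar>pmf \<mu> x * h x - pmf \<nu> x * h x\<bar> \<partial>count_space UNIV)"
    by (rule ennreal_leI)
  also have "\<dots> = (\<integral>\<^sup>+ x. ennreal \<bar>pmf \<mu> x * h x - pmf \<nu> x * h x\<bar> \<partial>count_space UNIV)"
    by (rule nn_integral_eq_integral[symmetric]) (use int assms in auto)
  also have "\<dots> = (\<integral>\<^sup>+ x. ennreal (\<bar>h x\<bar> * \<bar>pmf \<mu> x - pmf \<nu> x\<bar>) \<partial>count_space UNIV)"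
    by (rule nn_integral_cong) (simp add: abs_mult[symmetric] algebra_simps)
  finally show ?thesis .
qed

lemma abs_mult_le_half_sum_squares: "\<bar>(a::real) * b\<bar> \<le> (a\<^sup>2 + b\<^sup>2) / 2"
proof -
  have "0 \<le> (\<bar>a\<bar> - \<bar>b\<bar>)\<^sup>2" by simp
  then show ?thesis by (simp add: power2_eq_square abs_mult algebra_simps)
qed

lemma abs_component_product_le_norm_squared:
  fixes v :: "'n::finite \<Rightarrow> real"
  shows "\<bar>v i * v k\<bar> \<le> (\<Sum>l\<in>UNIV. (v l)\<^sup>2)"
proof (cases "i = k")
  case True
  then show ?thesis
    using member_le_sum[of k UNIV "\<lambda>l. (v l)\<^sup>2"] by (simp add: power2_eq_square)
next
  case False
  have "\<bar>v i * v k\<bar> \<le> (\<Sum>l\<in>{i, k}. (v l)\<^sup>2)"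
    using False abs_mult_le_half_sum_squares[of "v i" "v k"] by simp
  also have "\<dots> \<le> (\<Sum>l\<in>UNIV. (v l)\<^sup>2)"
    by (rule sum_mono2) auto
  finally show ?thesis .
qed

lemma sum_abs_component_products_le:
  fixes v :: "'n::finite \<Rightarrow> real"
  shows "(\<Sum>i\<in>UNIV. \<Sum>k\<in>UNIV. \<bar>v i * v k\<bar>) \<le> real CARD('n) * (\<Sum>l\<in>UNIV. (v l)\<^sup>2)"
proof -
  have "(\<Sum>i\<in>UNIV. \<Sum>k\<in>UNIV. \<bar>v i * v k\<bar>) \<le> (\<Sum>i\<in>UNIV. \<Sum>k\<in>UNIV. ((v i)\<^sup>2 + (v k)\<^sup>2) / 2)"
    by (intro sum_mono abs_mult_le_half_sum_squares)
  also have "\<dots> = real CARD('n) * (\<Sum>l\<in>UNIV. (v l)\<^sup>2)"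
    by (simp add: sum.distrib add_divide_distrib sum_divide_distrib[symmetric]
        sum_distrib_left[symmetric] sum_distrib_right[symmetric])
  finally show ?thesis .
qed

context
  fixes P :: "((int^'d::finite) \<times> (int^'d)) pmf"
begin

lemma set_pmf_lawW: "set_pmf (lawW P) = fst ` set_pmf P"
  by (simp add: lawW_def)

lemma measure_condW:
  assumes "w \<in> set_pmf (lawW P)"
  shows "measure (condW P w) S = measure P ({x. fst x = w} \<inter> S) / measure P {x. fst x = w}"
  unfolding condW_def using assms by (intro measure_cond_pmf) (auto simp: set_pmf_lawW)

lemma measure_eq_expectation_condW:
  "measure P S = measure_pmf.expectation (lawW P) (\<lambda>w. measure (condW P w) S)"
proof -
  have "bind_pmf (lawW P) (condW P) = P"
    unfolding condW_def lawW_def by (rule bind_cond_pmf_cancel) (auto simp: eq_commute vimage_def)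
  then have "ennreal (measure P S) = emeasure (bind_pmf (lawW P) (condW P)) S"
    by (simp add: measure_pmf.emeasure_eq_measure)
  also have "\<dots> = (\<integral>\<^sup>+w. ennreal (measure (condW P w) S) \<partial>lawW P)"
    unfolding measure_pmf.emeasure_eq_measure[symmetric] by (rule emeasure_bind_pmf)
  also have "\<dots> = ennreal (measure_pmf.expectation (lawW P) (\<lambda>w. measure (condW P w) S))"
    by (rule nn_integral_eq_integral) (auto intro!: integrable_measure_pmf_bounded[where B=1])
  finally show ?thesis
    by (simp add: integral_nonneg_AE)
qed

lemma QJ_nonneg: "0 \<le> QJ P J w" and QJ_le_1: "QJ P J w \<le> 1"
  by (auto simp: QJ_def)

lemma qJ_nonneg: "0 \<le> qJ P J" and qJ_le_1: "qJ P J \<le> 1"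
  by (auto simp: qJ_def)

lemma abs_QJ_diff_qJ_le_1: "\<bar>QJ P J w - qJ P J\<bar> \<le> 1"
  using QJ_nonneg[of J w] QJ_le_1[of J w] qJ_nonneg[of J] qJ_le_1[of J] by (simp add: abs_le_iff)

lemma integrable_abs_QJ_diff_qJ:
  "integrable (measure_pmf (lawW P)) (\<lambda>w. \<bar>QJ P J w - qJ P J\<bar>)"
  by (rule integrable_measure_pmf_bounded[where B=1]) (simp add: abs_QJ_diff_qJ_le_1)

lemma measure_fst_in_xi_eq:
  "measure P {x. fst x \<in> A \<and> xi x = J}
     = measure_pmf.expectation (lawW P) (\<lambda>w. indicator A w * QJ P J w)"
  unfolding measure_eq_expectation_condW
proof (rule integral_cong_AE)
  show "AE w in lawW P. measure (condW P w) {x. fst x \<in> A \<and> xi x = J} = indicator A w * QJ P J w"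
    unfolding AE_measure_pmf_iff
  proof
    fix w assume w: "w \<in> set_pmf (lawW P)"
    have "{x. fst x = w} \<inter> {x. fst x \<in> A \<and> xi x = J}
        = (if w \<in> A then {x. fst x = w} \<inter> {x. xi x = J} else {})"
      by auto
    then show "measure (condW P w) {x. fst x \<in> A \<and> xi x = J} = indicator A w * QJ P J w"
      unfolding QJ_def using measure_condW[OF w] by (simp add: indicator_def)
  qed
qed auto

lemma qJ_eq_expectation_QJ: "qJ P J = measure_pmf.expectation (lawW P) (QJ P J)"
  using measure_fst_in_xi_eq[of UNIV J] by (simp add: qJ_def)

text \<open>The paper's q^J u^J, kept undivided: uJ takes the junk value 0 where q^J = 0.\<close>

definition QJ_dev :: "int^'d \<Rightarrow> real" where
  "QJ_dev J = measure_pmf.expectation (lawW P) (\<lambda>w. \<bar>QJ P J w - qJ P J\<bar>)"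

lemma QJ_dev_nonneg: "0 \<le> QJ_dev J"
  unfolding QJ_dev_def by simp

lemma QJ_dev_le_2_qJ: "QJ_dev J \<le> 2 * qJ P J"
proof -
  have int_QJ: "integrable (measure_pmf (lawW P)) (QJ P J)"
    by (rule integrable_measure_pmf_bounded[where B=1]) (simp add: QJ_nonneg QJ_le_1)
  have "QJ_dev J \<le> measure_pmf.expectation (lawW P) (\<lambda>w. QJ P J w + qJ P J)"
    unfolding QJ_dev_def
    by (rule integral_mono)
       (use QJ_nonneg[of J] qJ_nonneg[of J] int_QJ in \<open>auto intro: integrable_abs_QJ_diff_qJ simp: abs_le_iff\<close>)
  also have "\<dots> = 2 * qJ P J"
    using int_QJ by (simp add: qJ_eq_expectation_QJ[symmetric])
  finally show ?thesis .
qed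

lemma uJ_eq: "uJ P J = QJ_dev J / qJ P J"
  unfolding uJ_def QJ_dev_def by simp

lemma uJ_nonneg: "0 \<le> uJ P J"
  using qJ_nonneg[of J] QJ_dev_nonneg[of J] by (simp add: uJ_eq)

lemma uJ_le_2: "uJ P J \<le> 2"
  using QJ_dev_le_2_qJ[of J] qJ_nonneg[of J] QJ_dev_nonneg[of J]
  by (cases "qJ P J = 0") (auto simp: uJ_eq divide_le_eq)

lemma uJ_le_ustar: "J \<in> calJ P \<Longrightarrow> uJ P J \<le> ustar P"
  unfolding ustar_def by (rule cSup_upper) (auto intro: bdd_aboveI[where M=2] simp: uJ_le_2)

lemma QJ_dev_le_qJ_ustar: "QJ_dev J \<le> qJ P J * ustar P"
proof (cases "J \<in> calJ P")
  case True
  then have "qJ P J > 0" by (simp add: calJ_def)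
  then show ?thesis
    using uJ_le_ustar[OF True] by (simp add: uJ_eq field_simps)
next
  case False
  then have "qJ P J = 0" using qJ_nonneg[of J] by (simp add: calJ_def)
  then show ?thesis using QJ_dev_le_2_qJ[of J] QJ_dev_nonneg[of J] by simp
qed

lemma abs_measure_fst_in_xi_diff_le:
  "\<bar>measure P {x. fst x \<in> A \<and> xi x = J} - qJ P J * measure P {x. fst x \<in> A}\<bar> \<le> QJ_dev J"
proof -
  have int_QJ: "integrable (measure_pmf (lawW P)) (\<lambda>w. indicator A w * QJ P J w)"
    by (rule integrable_measure_pmf_bounded[where B=1])
       (simp add: indicator_def QJ_nonneg QJ_le_1 abs_le_iff order_trans[OF _ QJ_le_1])
  have int_qJ: "integrable (measure_pmf (lawW P)) (\<lambda>w. indicator A w * qJ P J)"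
    by (rule integrable_measure_pmf_bounded[where B=1]) (simp add: indicator_def qJ_nonneg qJ_le_1)
  have "qJ P J * measure P {x. fst x \<in> A}
      = measure_pmf.expectation (lawW P) (\<lambda>w. indicator A w * qJ P J)"
    by (simp add: lawW_def vimage_def)
  then have "measure P {x. fst x \<in> A \<and> xi x = J} - qJ P J * measure P {x. fst x \<in> A}
     = measure_pmf.expectation (lawW P) (\<lambda>w. indicator A w * QJ P J w - indicator A w * qJ P J)"
    by (simp add: measure_fst_in_xi_eq Bochner_Integration.integral_diff[OF int_QJ int_qJ])
  also have "\<bar>\<dots>\<bar> \<le> measure_pmf.expectation (lawW P)
      (\<lambda>w. \<bar>indicator A w * QJ P J w - indicator A w * qJ P J\<bar>)"
    by (rule integral_abs_bound)
  also have "\<dots> \<le> QJ_dev J"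
    unfolding QJ_dev_def
    by (rule integral_mono)
       (auto intro!: integrable_abs_QJ_diff_qJ integrable_measure_pmf_bounded[where B=1]
         simp: indicator_def abs_QJ_diff_qJ_le_1)
  finally show ?thesis .
qed

lemma abs_measure_cond_xi_diff_le_uJ:
  assumes "J \<in> calJ P"
  shows "\<bar>measure (cond_pmf P {x. xi x = J}) {x. fst x \<in> A} - measure P {x. fst x \<in> A}\<bar> \<le> uJ P J"
proof -
  have q: "qJ P J > 0" using assms by (simp add: calJ_def)
  then have "set_pmf P \<inter> {x. xi x = J} \<noteq> {}"
    by (auto simp: qJ_def measure_pmf_zero_iff[symmetric])
  then have "measure (cond_pmf P {x. xi x = J}) {x. fst x \<in> A}
      = measure P {x. fst x \<in> A \<and> xi x = J} / qJ P J"
    by (simp add: measure_cond_pmf qJ_def Int_def conj_commute)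
  then have "measure (cond_pmf P {x. xi x = J}) {x. fst x \<in> A} - measure P {x. fst x \<in> A}
      = (measure P {x. fst x \<in> A \<and> xi x = J} - qJ P J * measure P {x. fst x \<in> A}) / qJ P J"
    using q by (simp add: field_simps)
  then show ?thesis
    using q abs_measure_fst_in_xi_diff_le[of A J] by (simp add: uJ_eq divide_right_mono)
qed

lemma calJ_nonempty: "calJ P \<noteq> {}"
proof -
  obtain x where "x \<in> set_pmf P"
    using set_pmf_not_empty[of P] by blast
  then have "qJ P (xi x) > 0"
    unfolding qJ_def by (rule measure_pmf_posI) simp
  then show ?thesis
    by (auto simp: calJ_def)
qed

lemma ustar_nonneg: "0 \<le> ustar P"
proof -
  obtain J where "J \<in> calJ P"
    using calJ_nonempty by blast
  then show ?thesis
    using uJ_nonneg[of J] uJ_le_ustar by fastforce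
qed

lemma nn_integral_abs_QJ_diff_qJ: "(\<integral>\<^sup>+ w. ennreal \<bar>QJ P J w - qJ P J\<bar> \<partial>lawW P) = ennreal (QJ_dev J)"
  unfolding QJ_dev_def by (rule nn_integral_eq_integral) (auto intro: integrable_abs_QJ_diff_qJ)

lemma sum_abs_products_QJ_dev_le:
  "(\<Sum>i\<in>UNIV. \<Sum>k\<in>UNIV. \<bar>real_of_int (J$i * J$k)\<bar> * QJ_dev J)
     \<le> real CARD('d) * (\<Sum>l\<in>UNIV. (real_of_int (J$l))\<^sup>2) * (qJ P J * ustar P)"
proof -
  have "(\<Sum>i\<in>UNIV. \<Sum>k\<in>UNIV. \<bar>real_of_int (J$i * J$k)\<bar> * QJ_dev J)
      \<le> (\<Sum>i\<in>UNIV. \<Sum>k\<in>UNIV. \<bar>real_of_int (J$i * J$k)\<bar>) * (qJ P J * ustar P)"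
    unfolding sum_distrib_right by (intro sum_mono mult_left_mono QJ_dev_le_qJ_ustar abs_ge_zero)
  also have "\<dots> \<le> real CARD('d) * (\<Sum>l\<in>UNIV. (real_of_int (J$l))\<^sup>2) * (qJ P J * ustar P)"
    using sum_abs_component_products_le[of "\<lambda>l. real_of_int (J$l)"] qJ_nonneg[of J] ustar_nonneg
    by (intro mult_right_mono) simp_all
  finally show ?thesis .
qed

lemma pmf_map_xi: "pmf (map_pmf xi P) J = qJ P J"
  by (simp add: pmf_map qJ_def vimage_def)

context
  assumes second_moment: "integrable (measure_pmf P) (\<lambda>x. \<Sum>i\<in>UNIV. (real_of_int ((xi x) $ i))\<^sup>2)"
begin

lemma integrable_xi_product: "integrable (measure_pmf P) (\<lambda>x. real_of_int ((xi x)$i * (xi x)$k))"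
proof (rule Bochner_Integration.integrable_bound[OF second_moment])
  show "AE x in measure_pmf P. norm (real_of_int ((xi x)$i * (xi x)$k))
      \<le> norm (\<Sum>i\<in>UNIV. (real_of_int ((xi x) $ i))\<^sup>2)"
    using abs_component_product_le_norm_squared[of "\<lambda>l. real_of_int (xi _ $ l)"]
    by (auto intro!: AE_I2 simp: sum_nonneg)
qed simp

lemma trace_sigma2_eq:
  "trace_mat (sigma2 P) = measure_pmf.expectation P (\<lambda>x. \<Sum>i\<in>UNIV. (real_of_int ((xi x) $ i))\<^sup>2)"
  unfolding trace_mat_def sigma2_def
  by (subst Bochner_Integration.integral_sum) (auto intro!: integrable_xi_product[simplified] simp: power2_eq_square)

lemma abs_R2_le:
  assumes w: "w \<in> set_pmf (lawW P)"
  shows "ennreal \<bar>R2 P w i k\<bar>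
     \<le> (\<integral>\<^sup>+ J. ennreal (\<bar>real_of_int (J$i * J$k)\<bar> * \<bar>QJ P J w - qJ P J\<bar>) \<partial>count_space UNIV)"
proof -
  define h where "h = (\<lambda>J::int^'d. real_of_int (J$i * J$k))"
  have ne: "set_pmf P \<inter> {x. fst x = w} \<noteq> {}"
    using w by (auto simp: set_pmf_lawW)
  have R2_eq: "R2 P w i k = measure_pmf.expectation (map_pmf xi (condW P w)) h
      - measure_pmf.expectation (map_pmf xi P) h"
    by (simp add: R2_def sigma2_def h_def)
  have int_cond: "integrable (measure_pmf (map_pmf xi (condW P w))) h"
    unfolding integrable_map_pmf_eq condW_def h_def
    by (rule integrable_cond_pmf[OF ne integrable_xi_product])
  have int_P: "integrable (measure_pmf (map_pmf xi P)) h"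
    unfolding integrable_map_pmf_eq h_def by (rule integrable_xi_product)
  have pmf_QJ: "pmf (map_pmf xi (condW P w)) J = QJ P J w" for J
    by (simp add: pmf_map QJ_def vimage_def)
  show ?thesis
    using abs_expectation_diff_le[OF int_cond int_P] unfolding R2_eq pmf_QJ pmf_map_xi h_def .
qed

lemma nn_integral_norm1_R2_le:
  "(\<integral>\<^sup>+ w. ennreal (norm1 (R2 P w)) \<partial>lawW P)
     \<le> (\<integral>\<^sup>+ J. ennreal (\<Sum>i\<in>UNIV. \<Sum>k\<in>UNIV. \<bar>real_of_int (J$i * J$k)\<bar> * QJ_dev J) \<partial>count_space UNIV)"
proof -
  define F where "F = (\<lambda>i k (J::int^'d) w. ennreal \<bar>real_of_int (J$i * J$k)\<bar> * ennreal \<bar>QJ P J w - qJ P J\<bar>)"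
  have "(\<integral>\<^sup>+ w. ennreal (norm1 (R2 P w)) \<partial>lawW P)
      \<le> (\<integral>\<^sup>+ w. (\<Sum>i\<in>UNIV. \<Sum>k\<in>UNIV. \<integral>\<^sup>+ J. F i k J w \<partial>count_space UNIV) \<partial>lawW P)"
  proof (rule nn_integral_mono_AE, unfold AE_measure_pmf_iff, intro ballI)
    fix w assume "w \<in> set_pmf (lawW P)"
    then have "(\<Sum>i\<in>UNIV. \<Sum>k\<in>UNIV. ennreal \<bar>R2 P w i k\<bar>)
        \<le> (\<Sum>i\<in>UNIV. \<Sum>k\<in>UNIV. \<integral>\<^sup>+ J. F i k J w \<partial>count_space UNIV)"
      unfolding F_def ennreal_mult[OF abs_ge_zero abs_ge_zero, symmetric] by (intro sum_mono abs_R2_le)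
    then show "ennreal (norm1 (R2 P w)) \<le> (\<Sum>i\<in>UNIV. \<Sum>k\<in>UNIV. \<integral>\<^sup>+ J. F i k J w \<partial>count_space UNIV)"
      unfolding norm1_def by (simp add: sum_nonneg)
  qed
  also have "\<dots> = (\<Sum>i\<in>UNIV. \<Sum>k\<in>UNIV. \<integral>\<^sup>+ J. \<integral>\<^sup>+ w. F i k J w \<partial>lawW P \<partial>count_space UNIV)"
    by (simp add: nn_integral_sum nn_integral_count_space_nn_integral)
  also have "\<dots> = (\<Sum>i\<in>UNIV. \<Sum>k\<in>UNIV. \<integral>\<^sup>+ J. ennreal (\<bar>real_of_int (J$i * J$k)\<bar> * QJ_dev J) \<partial>count_space UNIV)"
    unfolding F_def by (simp add: nn_integral_cmult nn_integral_abs_QJ_diff_qJ ennreal_mult QJ_dev_nonneg)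
  also have "\<dots> = (\<integral>\<^sup>+ J. ennreal (\<Sum>i\<in>UNIV. \<Sum>k\<in>UNIV. \<bar>real_of_int (J$i * J$k)\<bar> * QJ_dev J) \<partial>count_space UNIV)"
    by (simp add: QJ_dev_nonneg sum_nonneg flip: nn_integral_sum)
  finally show ?thesis .
qed

lemma expectation_norm1_R2_le:
  "measure_pmf.expectation (lawW P) (\<lambda>w. norm1 (R2 P w)) \<le> real CARD('d) * trace_mat (sigma2 P) * ustar P"
proof -
  define S where "S = (\<lambda>J::int^'d. \<Sum>l\<in>UNIV. (real_of_int (J $ l))\<^sup>2)"
  have trace_nonneg: "0 \<le> trace_mat (sigma2 P)"
    unfolding trace_sigma2_eq by (simp add: sum_nonneg)
  have "(\<integral>\<^sup>+ w. ennreal (norm1 (R2 P w)) \<partial>lawW P)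
      \<le> (\<integral>\<^sup>+ J. ennreal (qJ P J) * ennreal (real CARD('d) * S J * ustar P) \<partial>count_space UNIV)"
    using nn_integral_norm1_R2_le
  proof (rule order_trans)
    show "(\<integral>\<^sup>+ J. ennreal (\<Sum>i\<in>UNIV. \<Sum>k\<in>UNIV. \<bar>real_of_int (J$i * J$k)\<bar> * QJ_dev J) \<partial>count_space UNIV)
      \<le> (\<integral>\<^sup>+ J. ennreal (qJ P J) * ennreal (real CARD('d) * S J * ustar P) \<partial>count_space UNIV)"
      using sum_abs_products_QJ_dev_le
      by (intro nn_integral_mono)
         (simp add: S_def ennreal_mult'[symmetric] qJ_nonneg ennreal_leI mult_ac)
  qed
  also have "\<dots> = (\<integral>\<^sup>+ J. ennreal (real CARD('d) * S J * ustar P) \<partial>map_pmf xi P)"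
    by (simp add: nn_integral_measure_pmf pmf_map_xi)
  also have "\<dots> = (\<integral>\<^sup>+ x. ennreal (real CARD('d) * S (xi x) * ustar P) \<partial>P)"
    by simp
  also have "\<dots> = ennreal (real CARD('d) * trace_mat (sigma2 P) * ustar P)"
    unfolding trace_sigma2_eq S_def using ustar_nonneg
    by (subst nn_integral_eq_integral) (auto intro!: second_moment sum_nonneg AE_I2 mult_nonneg_nonneg)
  finally show ?thesis
    using trace_nonneg ustar_nonneg
    by (subst integral_eq_nn_integral) (auto simp: norm1_def sum_nonneg intro!: enn2real_leI)
qed

end


context
  assumes exch: "map_pmf (\<lambda>(w, w'). (w', w)) P = P"
begin

lemma measure_fst_in_xi_swap:
  "measure P {x. fst x \<in> A \<and> xi x = J} = measure P {x. fst x \<in> {v. v - J \<in> A} \<and> xi x = - J}"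
proof -
  have "measure P {x. fst x \<in> A \<and> xi x = J}
      = measure P ((\<lambda>(w, w'). (w', w)) -` {x. fst x \<in> A \<and> xi x = J})"
    by (subst exch[symmetric]) simp
  also have "(\<lambda>(w, w'). (w', w)) -` {x. fst x \<in> A \<and> xi x = J} = {x. fst x \<in> {v. v - J \<in> A} \<and> xi x = - J}"
    by (auto simp: xi_def algebra_simps)
  finally show ?thesis .
qed

lemma qJ_uminus: "qJ P (- J) = qJ P J"
  using measure_fst_in_xi_swap[of UNIV J] by (simp add: qJ_def)

lemma abs_measure_shift_le:
  assumes "J \<in> calJ P"
  shows "\<bar>measure P {x. fst x \<in> A} - measure P {x. fst x - J \<in> A}\<bar> \<le> uJ P J + uJ P (- J)"
proof -
  have q: "qJ P J > 0" using assms by (simp add: calJ_def)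
  have "\<bar>measure P {x. fst x \<in> A \<and> xi x = J} - qJ P J * measure P {x. fst x \<in> A}\<bar> \<le> QJ_dev J"
    by (rule abs_measure_fst_in_xi_diff_le)
  moreover have "\<bar>measure P {x. fst x \<in> A \<and> xi x = J} - qJ P J * measure P {x. fst x - J \<in> A}\<bar>
      \<le> QJ_dev (- J)"
    using abs_measure_fst_in_xi_diff_le[of "{v. v - J \<in> A}" "- J"]
    by (simp add: measure_fst_in_xi_swap[of A J] qJ_uminus)
  ultimately have "\<bar>qJ P J * measure P {x. fst x \<in> A} - qJ P J * measure P {x. fst x - J \<in> A}\<bar>
      \<le> QJ_dev J + QJ_dev (- J)"
    by (simp add: abs_le_iff)
  then have "qJ P J * \<bar>measure P {x. fst x \<in> A} - measure P {x. fst x - J \<in> A}\<bar>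
      \<le> QJ_dev J + QJ_dev (- J)"
    using q by (simp add: abs_mult right_diff_distrib[symmetric])
  then show ?thesis
    using q by (simp add: uJ_eq qJ_uminus add_divide_distrib[symmetric] le_divide_eq mult.commute)
qed

lemma abs_measure_shift_sum_list_le:
  assumes "set L \<subseteq> calJ P"
  shows "\<bar>measure P {x. fst x + (c + sum_list L) \<in> A} - measure P {x. fst x + c \<in> A}\<bar>
     \<le> sum_list (map (\<lambda>J. uJ P J + uJ P (- J)) L)"
  using assms
proof (induction L arbitrary: c)
  case Nil
  then show ?case by simp
next
  case (Cons J L)
  have "\<bar>measure P {x. fst x + ((c + J) + sum_list L) \<in> A} - measure P {x. fst x + (c + J) \<in> A}\<bar>
     \<le> sum_list (map (\<lambda>J. uJ P J + uJ P (- J)) L)"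
    using Cons by auto
  moreover have "\<bar>measure P {x. fst x + (c + J) \<in> A} - measure P {x. fst x + c \<in> A}\<bar> \<le> uJ P J + uJ P (- J)"
    using Cons.prems abs_measure_shift_le[of J "{v. v + (c + J) \<in> A}"] by (simp add: algebra_simps)
  ultimately show ?case
    by (simp add: add.assoc abs_le_iff)
qed

lemma dTV_shift_le:
  assumes "set L \<subseteq> calJ P"
  shows "dTV (map_pmf (\<lambda>x. fst x + sum_list L) P) (lawW P) \<le> sum_list (map (\<lambda>J. uJ P J + uJ P (- J)) L)"
  unfolding dTV_def
  using abs_measure_shift_sum_list_le[OF assms, of 0]
  by (intro cSUP_least) (simp_all add: lawW_def vimage_def)

lemma dTV_shift_cond_xi_le:
  assumes "set L \<subseteq> calJ P" "J \<in> calJ P"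
  shows "dTV (map_pmf (\<lambda>x. fst x + sum_list L) (cond_pmf P {x. xi x = J})) (map_pmf fst (cond_pmf P {x. xi x = J}))
     \<le> sum_list (map (\<lambda>J. uJ P J + uJ P (- J)) L) + 2 * uJ P J"
  unfolding dTV_def
proof (rule cSUP_least)
  fix A
  have "\<bar>measure P {x. fst x + sum_list L \<in> A} - measure P {x. fst x \<in> A}\<bar>
      \<le> sum_list (map (\<lambda>J. uJ P J + uJ P (- J)) L)"
    using abs_measure_shift_sum_list_le[OF assms(1), of 0 A] by simp
  moreover have "\<bar>measure (cond_pmf P {x. xi x = J}) {x. fst x + sum_list L \<in> A}
      - measure P {x. fst x + sum_list L \<in> A}\<bar> \<le> uJ P J"
    using abs_measure_cond_xi_diff_le_uJ[OF assms(2), of "{v. v + sum_list L \<in> A}"] by simp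
  moreover have "\<bar>measure (cond_pmf P {x. xi x = J}) {x. fst x \<in> A} - measure P {x. fst x \<in> A}\<bar> \<le> uJ P J"
    by (rule abs_measure_cond_xi_diff_le_uJ[OF assms(2)])
  ultimately show "\<bar>measure (map_pmf (\<lambda>x. fst x + sum_list L) (cond_pmf P {x. xi x = J})) A
      - measure (map_pmf fst (cond_pmf P {x. xi x = J})) A\<bar>
     \<le> sum_list (map (\<lambda>J. uJ P J + uJ P (- J)) L) + 2 * uJ P J"
    by (simp add: vimage_def abs_le_iff)
qed simp

end

end

lemma utilde_le_utilde_star: "utilde P Jsel j \<le> utilde_star P Jsel"
  unfolding utilde_star_def by (rule Max_ge) simp_all

theorem lemma4p3:
  fixes P :: "((int^'d::finite) \<times> (int^'d)) pmf"
    and Jsel :: "'d \<Rightarrow> (int^'d) list"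
  assumes exch: "map_pmf (\<lambda>(w, w'). (w', w)) P = P"
    and second_moment: "integrable (measure_pmf P)
          (\<lambda>x. \<Sum>i\<in>UNIV. (real_of_int ((xi x) $ i))^2)"
    and Jsel_in: "\<And>j. set (Jsel j) \<subseteq> calJ P"
    and Jsel_sum: "\<And>j. sum_list (Jsel j) = unitv j"
  shows "(\<forall>j. \<forall>J\<in>calJ P.
      dTV (map_pmf (\<lambda>x. fst x + unitv j) P) (lawW P) \<le> utilde P Jsel j
    \<and> utilde P Jsel j \<le> utilde_star P Jsel
    \<and> dTV (map_pmf (\<lambda>x. fst x + unitv j) (cond_pmf P {x. xi x = J}))
          (map_pmf fst (cond_pmf P {x. xi x = J})) \<le> utilde P Jsel j + 2 * uJ P J
    \<and> utilde P Jsel j + 2 * uJ P J \<le> utilde_star P Jsel + 2 * ustar P)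
    \<and> measure_pmf.expectation (lawW P) (\<lambda>w. norm1 (R2 P w))
          \<le> real CARD('d) * trace_mat (sigma2 P) * ustar P"
proof (intro conjI allI ballI)
  fix j J assume J: "J \<in> calJ P"
  show "dTV (map_pmf (\<lambda>x. fst x + unitv j) P) (lawW P) \<le> utilde P Jsel j"
    using dTV_shift_le[OF exch Jsel_in] unfolding utilde_def Jsel_sum .
  show "utilde P Jsel j \<le> utilde_star P Jsel"
    by (rule utilde_le_utilde_star)
  show "dTV (map_pmf (\<lambda>x. fst x + unitv j) (cond_pmf P {x. xi x = J}))
      (map_pmf fst (cond_pmf P {x. xi x = J})) \<le> utilde P Jsel j + 2 * uJ P J"
    using dTV_shift_cond_xi_le[OF exch Jsel_in J] unfolding utilde_def Jsel_sum .
  show "utilde P Jsel j + 2 * uJ P J \<le> utilde_star P Jsel + 2 * ustar P"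
    using utilde_le_utilde_star[of P Jsel j] uJ_le_ustar[OF J] by simp
next
  show "measure_pmf.expectation (lawW P) (\<lambda>w. norm1 (R2 P w))
      \<le> real CARD('d) * trace_mat (sigma2 P) * ustar P"
    using expectation_norm1_R2_le[OF second_moment] .
qed

end
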